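(* Let $(f,g),(f',g')\in\Theta$, where the unembedding matrix $L=(g(y_1)\cdots g(y_k))\in\mathbb R^{m\times k}$ has rank $m$, and let $h:\mathcal X\to\Delta^{C-1}$, $C\ge2$, be a concept that is linearly encoded in $f$ with weight matrix $W\in\mathbb R^{m\times C}$ and bias $b\in\mathbb R^C$. Let $A\in\mathbb R^{k\times C}$ be any matrix with $W=LA$. Then $$\inf_{W'\in\mathbb R^{m'\times C},\,b'\in\mathbb R^C}\ \mathbb E_{x\sim p_x}\Big[\mathrm{KL}\big(p_h(\cdot\mid x)\,\big\|\,\mathrm{softmax}(W'^\top f'(x)+b')\big)\Big]\ \le\ \frac12\|A\|_{\mathrm{op}}^2\,d_{\mathrm{logit}}^2(p_{f,g},p_{f',g'}),$$ where $m'$ is the representation dimension of $f'$ and $\|\cdot\|_{\mathrm{op}}$ is the operator norm.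
   Context: Model class $\Theta$: pairs $(f,g)$, $f:\mathcal X\to\mathbb R^m$, $g:\mathcal Y\to\mathbb R^m$, $\mathcal Y=\{y_1,\dots,y_k\}$, $\sum_y g(y)=0$, inducing $p_{f,g}(y\mid x)\propto\exp(f(x)^\top g(y))$; $p_x$ is the data distribution. Logits $u(x)=L^\top f(x)$, $u'(x)=L'^\top f'(x)$; $d_{\mathrm{logit}}^2=\mathbb E_{x\sim p_x}\|u(x)-u'(x)\|_2^2$. A categorical concept is a map $h:\mathcal X\to\Delta^{C-1}$ (simplex over $C$ values) defining $p_h(c\mid x)=h(x)_c$. It is linearly encoded in $f$ if there exist $w_c\in\mathbb R^m$, $b_c\in\mathbb R$ ($c=1,\dots,C$) with $\exp(w_c^\top f(x)+b_c)/\sum_{j=1}^C\exp(w_j^\top f(x)+b_j)=p_h(c\mid x)$ for all $c$ and $x$; $W$ is the matrix with columns $w_c$ and $b=(b_c)_c$. *)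

theory Defs
  imports "HOL-Analysis.Analysis" "HOL-Probability.Probability"
begin

definition in_Theta :: "('x \<Rightarrow> real^'m) \<Rightarrow> ('y::finite \<Rightarrow> real^'m) \<Rightarrow> bool" where
  "in_Theta f g \<longleftrightarrow> (\<Sum>y\<in>UNIV. g y) = 0"

text \<open>Unembedding matrix L = (g(y_1) ... g(y_k)), an m x k matrix with columns g(y).\<close>
definition unembed :: "('y::finite \<Rightarrow> real^'m) \<Rightarrow> real^'y^'m" where
  "unembed g = (\<chi> i y. g y $ i)"

definition logits :: "('x \<Rightarrow> real^'m) \<Rightarrow> ('y::finite \<Rightarrow> real^'m) \<Rightarrow> 'x \<Rightarrow> real^'y" where
  "logits f g x = transpose (unembed g) *v f x"

definition dlogit2 :: "'x measure \<Rightarrow> ('x \<Rightarrow> real^'m) \<Rightarrow> ('y::finite \<Rightarrow> real^'m)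
    \<Rightarrow> ('x \<Rightarrow> real^'m2) \<Rightarrow> ('y \<Rightarrow> real^'m2) \<Rightarrow> ennreal" where
  "dlogit2 px f g f' g' = (\<integral>\<^sup>+ x. ennreal ((norm (logits f g x - logits f' g' x))\<^sup>2) \<partial>px)"

definition softmax :: "real^'c::finite \<Rightarrow> real^'c" where
  "softmax z = (\<chi> c. exp (z $ c) / (\<Sum>j\<in>UNIV. exp (z $ j)))"

definition prob_simplex :: "(real^'c::finite) set" where
  "prob_simplex = {p. (\<forall>c. 0 \<le> p $ c) \<and> (\<Sum>c\<in>UNIV. p $ c) = 1}"

definition KL :: "real^'c::finite \<Rightarrow> real^'c \<Rightarrow> real" where
  "KL p q = (\<Sum>c\<in>UNIV. if p $ c = 0 then 0 else p $ c * ln (p $ c / q $ c))"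

definition lin_encoded :: "('x \<Rightarrow> real^'c::finite) \<Rightarrow> ('x \<Rightarrow> real^'m) \<Rightarrow> real^'c^'m \<Rightarrow> real^'c \<Rightarrow> bool" where
  "lin_encoded h f W b \<longleftrightarrow>
     (\<forall>x c. exp ((transpose W *v f x) $ c + b $ c) / (\<Sum>j\<in>UNIV. exp ((transpose W *v f x) $ j + b $ j)) = h x $ c)"

end

theory Submission
  imports Defs
begin

text \<open>Take the probe W' = L' A, b' = b on f'. Since W = L A, we have W^T f = A^T u, so
  h = softmax (A^T u + b) while the probe predicts softmax (A^T u' + b). For softmax
  distributions, KL (softmax z) (softmax z') is the log-moment generating function of z' - z
  under softmax z, centred at its mean; as the components of z' - z lie in
  [-|z' - z|, |z' - z|], Hoeffding's lemma bounds it by |z' - z|^2 / 2.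
  Finally |A^T (u - u')| \<le> |A|_op |u - u'|, and integrating over x gives the claim.\<close>

lemma Hoeffdings_lemma_finite:
  fixes p d :: "'c::finite \<Rightarrow> real"
  assumes p_nonneg: "\<And>c. 0 \<le> p c" and p_sum: "(\<Sum>c\<in>UNIV. p c) = 1"
    and d_bounds: "\<And>c. d c \<in> {a..b}"
  shows "ln (\<Sum>c\<in>UNIV. p c * exp (d c)) - (\<Sum>c\<in>UNIV. p c * d c) \<le> (b - a)\<^sup>2 / 8"
proof -
  have mass: "(\<integral>\<^sup>+c. ennreal (p c) \<partial>count_space UNIV) = 1"
    using p_sum by (simp add: nn_integral_count_space_finite p_nonneg)
  define P where "P = embed_pmf p"
  have pmf_P: "pmf P c = p c" for c
    unfolding P_def using pmf_embed_pmf[OF p_nonneg mass] .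
  interpret interval_bounded_random_variable "measure_pmf P" d a b
    using d_bounds by unfold_locales (auto intro!: AE_I2)
  define \<mu> where "\<mu> = (\<Sum>c\<in>UNIV. p c * d c)"
  have mean: "measure_pmf.expectation P d = \<mu>"
    using integral_measure_pmf_real[of UNIV P d] by (simp add: \<mu>_def pmf_P mult.commute)
  have "ennreal (\<Sum>c\<in>UNIV. p c * exp (d c - \<mu>))
      = (\<integral>\<^sup>+c. exp (1 * (d c - measure_pmf.expectation P d)) \<partial>P)"
    by (simp add: nn_integral_measure_pmf nn_integral_count_space_finite pmf_P mean p_nonneg
        flip: ennreal_mult)
  also have "\<dots> \<le> ennreal (exp (1\<^sup>2 * (b - a)\<^sup>2 / 8))"
    by (rule Hoeffdings_lemma_nn_integral) simp
  finally have upper: "(\<Sum>c\<in>UNIV. p c * exp (d c)) \<le> exp (\<mu> + (b - a)\<^sup>2 / 8)"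
    by (simp add: exp_diff exp_add sum_divide_distrib[symmetric] pos_divide_le_eq mult.commute)
  have "exp a = (\<Sum>c\<in>UNIV. p c * exp a)"
    by (simp flip: sum_distrib_right add: p_sum)
  also have "\<dots> \<le> (\<Sum>c\<in>UNIV. p c * exp (d c))"
    using d_bounds p_nonneg by (intro sum_mono mult_left_mono) auto
  finally have "0 < (\<Sum>c\<in>UNIV. p c * exp (d c))"
    using exp_gt_zero order_less_le_trans by blast
  then have "ln (\<Sum>c\<in>UNIV. p c * exp (d c)) \<le> \<mu> + (b - a)\<^sup>2 / 8"
    using upper by (metis exp_gt_zero ln_exp ln_le_cancel_iff)
  then show ?thesis
    unfolding \<mu>_def by simp
qed

lemma softmax_in_prob_simplex: "softmax z \<in> prob_simplex"
proof -
  have "(\<Sum>j\<in>UNIV. exp (z $ j)) > 0"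
    by (intro sum_pos) auto
  then show ?thesis
    by (simp add: prob_simplex_def softmax_def sum_divide_distrib[symmetric])
qed

lemma KL_softmax_eq:
  fixes z z' :: "real^'c::finite"
  defines "p \<equiv> softmax z"
  shows "KL p (softmax z') =
    ln (\<Sum>c\<in>UNIV. p $ c * exp (z' $ c - z $ c)) - (\<Sum>c\<in>UNIV. p $ c * (z' $ c - z $ c))"
proof -
  define Z where "Z = (\<Sum>j\<in>UNIV. exp (z $ j))"
  define Z' where "Z' = (\<Sum>j\<in>UNIV. exp (z' $ j))"
  have Z_pos: "Z > 0" and Z'_pos: "Z' > 0"
    unfolding Z_def Z'_def by (auto intro: sum_pos)
  have p_eq: "p $ c = exp (z $ c) / Z" for c
    unfolding p_def softmax_def Z_def by simp
  have p_pos: "p $ c > 0" for c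
    using Z_pos by (simp add: p_eq)
  have p_sum: "(\<Sum>c\<in>UNIV. p $ c) = 1"
    using softmax_in_prob_simplex[of z] unfolding p_def prob_simplex_def by simp
  have partition_ratio: "Z' / Z = (\<Sum>c\<in>UNIV. p $ c * exp (z' $ c - z $ c))"
    unfolding Z'_def sum_divide_distrib by (intro sum.cong refl) (simp add: p_eq exp_diff)
  have log_ratio: "ln (p $ c / softmax z' $ c) = ln (Z' / Z) - (z' $ c - z $ c)" for c
  proof -
    have "p $ c / softmax z' $ c = (Z' / Z) / exp (z' $ c - z $ c)"
      using Z_pos Z'_pos by (simp add: p_eq softmax_def Z'_def[symmetric] exp_diff field_simps)
    then have "ln (p $ c / softmax z' $ c) = ln (Z' / Z) - ln (exp (z' $ c - z $ c))"
      using Z_pos Z'_pos by (simp only: ln_divide_pos divide_pos_pos exp_gt_zero)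
    then show ?thesis
      by simp
  qed
  have "KL p (softmax z') = (\<Sum>c\<in>UNIV. p $ c * ln (Z' / Z) - p $ c * (z' $ c - z $ c))"
    unfolding KL_def
    by (intro sum.cong refl)
      (simp add: log_ratio right_diff_distrib p_pos[THEN less_imp_neq, symmetric])
  also have "\<dots> = ln (Z' / Z) - (\<Sum>c\<in>UNIV. p $ c * (z' $ c - z $ c))"
    by (simp add: sum_subtractf p_sum flip: sum_distrib_right)
  finally show ?thesis
    unfolding partition_ratio .
qed

lemma KL_softmax_le:
  fixes z z' :: "real^'c::finite"
  shows "KL (softmax z) (softmax z') \<le> (norm (z' - z))\<^sup>2 / 2"
proof -
  define r where "r = norm (z' - z)"
  have "z' $ c - z $ c \<in> {- r..r}" for c
    using component_le_norm_cart[of "z' - z" c] unfolding r_def by (simp add: abs_le_iff)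
  moreover have "\<And>c. 0 \<le> softmax z $ c" "(\<Sum>c\<in>UNIV. softmax z $ c) = 1"
    using softmax_in_prob_simplex[of z] by (auto simp: prob_simplex_def)
  ultimately have "KL (softmax z) (softmax z') \<le> (r - - r)\<^sup>2 / 8"
    unfolding KL_softmax_eq by (intro Hoeffdings_lemma_finite) auto
  then show ?thesis
    unfolding r_def by (simp add: power_mult_distrib)
qed

lemma norm_transpose_mult_le_onorm:
  fixes A :: "real^'c::finite^'y::finite"
  shows "norm (transpose A *v v) \<le> onorm (\<lambda>v. A *v v) * norm v"
proof -
  define w where "w = transpose A *v v"
  have "(norm w)\<^sup>2 = v \<bullet> (A *v w)"
    unfolding power2_norm_eq_inner w_def transpose_matrix_vector dot_lmul_matrix ..
  also have "\<dots> \<le> norm v * norm (A *v w)"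
    by (rule norm_cauchy_schwarz)
  also have "\<dots> \<le> norm v * (onorm (\<lambda>v. A *v v) * norm w)"
    using onorm[OF matrix_vector_mul_bounded_linear[of A], of w] by (intro mult_left_mono) auto
  finally have "norm w * norm w \<le> (onorm (\<lambda>v. A *v v) * norm v) * norm w"
    by (simp add: power2_eq_square algebra_simps)
  moreover have "0 \<le> onorm (\<lambda>v. A *v v) * norm v"
    using onorm_pos_le[OF matrix_vector_mul_bounded_linear[of A]] by simp
  ultimately show ?thesis
    unfolding w_def[symmetric] by (cases "norm w = 0") (auto simp: mult_le_cancel_right)
qed

text \<open>Unlike \<open>nn_integral_cmult\<close>, this needs no measurability of f.\<close>
lemma nn_integral_cmult_le:
  assumes "r \<ge> 0"
  shows "(\<integral>\<^sup>+ x. ennreal r * f x \<partial>M) \<le> ennreal r * integral\<^sup>N M f"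
proof (cases "r = 0")
  case True
  then show ?thesis by simp
next
  case False
  with assms have r_pos: "r > 0" by simp
  show ?thesis
    unfolding nn_integral_def[of M "\<lambda>x. ennreal r * f x"]
  proof (rule SUP_least, clarify)
    fix s assume s: "simple_function M s" "s \<le> (\<lambda>x. ennreal r * f x)"
    define s' where "s' = (\<lambda>x. ennreal (1/r) * s x)"
    have simple_s': "simple_function M s'"
      unfolding s'_def using s(1) by auto
    have "s' x \<le> ennreal (1/r) * (ennreal r * f x)" for x
      unfolding s'_def using s(2) by (intro mult_left_mono) (auto simp: le_fun_def)
    then have "s' \<le> f"
      using r_pos by (auto simp: le_fun_def mult.assoc[symmetric] simp flip: ennreal_mult)
    then have "integral\<^sup>S M s' \<le> integral\<^sup>N M f"
      unfolding nn_integral_def using simple_s' by (intro SUP_upper) auto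
    moreover have "integral\<^sup>S M s = ennreal r * integral\<^sup>S M s'"
      unfolding s'_def using r_pos s(1)
      by (simp add: simple_integral_mult mult.assoc[symmetric] flip: ennreal_mult)
    ultimately show "integral\<^sup>S M s \<le> ennreal r * integral\<^sup>N M f"
      by (simp add: mult_left_mono)
  qed
qed

lemma lin_encoded_iff_softmax:
  "lin_encoded h f W b \<longleftrightarrow> (\<forall>x. h x = softmax (transpose W *v f x + b))"
  unfolding lin_encoded_def softmax_def by (auto simp: vec_eq_iff)

lemma transpose_unembed_mult_apply:
  "transpose (unembed g ** A) *v f x = transpose A *v logits f g x"
  unfolding logits_def matrix_transpose_mul matrix_vector_mul_assoc ..

lemma KL_transported_probe_le:
  assumes "lin_encoded h f (unembed g ** A) b"
  shows "KL (h x) (softmax (transpose (unembed g' ** A) *v f' x + b))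
    \<le> (1/2) * (onorm (\<lambda>v. A *v v))\<^sup>2 * (norm (logits f g x - logits f' g' x))\<^sup>2"
proof -
  define u where "u = logits f g x"
  define u' where "u' = logits f' g' x"
  have "KL (h x) (softmax (transpose (unembed g' ** A) *v f' x + b))
      = KL (softmax (transpose A *v u + b)) (softmax (transpose A *v u' + b))"
    using assms unfolding lin_encoded_iff_softmax transpose_unembed_mult_apply u_def u'_def by simp
  also have "\<dots> \<le> (norm ((transpose A *v u' + b) - (transpose A *v u + b)))\<^sup>2 / 2"
    by (rule KL_softmax_le)
  also have "(transpose A *v u' + b) - (transpose A *v u + b) = transpose A *v (u' - u)"
    by (simp add: matrix_vector_mult_diff_distrib)
  also have "(norm (transpose A *v (u' - u)))\<^sup>2 / 2 \<le> (onorm (\<lambda>v. A *v v) * norm (u - u'))\<^sup>2 / 2"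
    using norm_transpose_mult_le_onorm[of A "u' - u"]
    by (intro divide_right_mono power_mono) (auto simp: norm_minus_commute)
  finally show ?thesis
    unfolding u_def u'_def by (simp add: power_mult_distrib)
qed

theorem mainTheorem9:
  fixes px :: "'x measure"
    and f :: "'x \<Rightarrow> real^'m" and g :: "'y::finite \<Rightarrow> real^'m"
    and f' :: "'x \<Rightarrow> real^'m2" and g' :: "'y \<Rightarrow> real^'m2"
    and h :: "'x \<Rightarrow> real^'c::finite"
    and W :: "real^'c^'m" and b :: "real^'c"
    and A :: "real^'c^'y"
  assumes "prob_space px"
    and "in_Theta f g" and "in_Theta f' g'"
    and "rank (unembed g) = CARD('m)"
    and "CARD('c) \<ge> 2"
    and "\<forall>x. h x \<in> prob_simplex"
    and "lin_encoded h f W b"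
    and "W = unembed g ** A"
  shows "(INF W'b' \<in> (UNIV :: ((real^'c^'m2) \<times> (real^'c)) set).
            \<integral>\<^sup>+ x. ennreal (KL (h x) (softmax (transpose (fst W'b') *v f' x + snd W'b'))) \<partial>px)
         \<le> ennreal ((1/2) * (onorm (\<lambda>v. A *v v))\<^sup>2) * dlogit2 px f g f' g'"
proof -
  let ?c = "(1/2) * (onorm (\<lambda>v. A *v v))\<^sup>2"
  let ?probe_loss = "\<lambda>W' b'. \<integral>\<^sup>+ x. ennreal (KL (h x) (softmax (transpose W' *v f' x + b'))) \<partial>px"
  have "(INF W'b' \<in> UNIV. ?probe_loss (fst W'b') (snd W'b')) \<le> ?probe_loss (unembed g' ** A) b"
    by (rule INF_lower2[of "(unembed g' ** A, b)"]) auto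
  also have "\<dots> \<le> \<integral>\<^sup>+ x. ennreal ?c * ennreal ((norm (logits f g x - logits f' g' x))\<^sup>2) \<partial>px"
    using KL_transported_probe_le[OF assms(7)[unfolded assms(8)]]
    by (intro nn_integral_mono) (simp add: ennreal_leI flip: ennreal_mult)
  also have "\<dots> \<le> ennreal ?c * dlogit2 px f g f' g'"
    unfolding dlogit2_def by (rule nn_integral_cmult_le) simp
  finally show ?thesis .
qed

end
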